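(* Let $(N,M,W,C,P,\infty)$ be an MRS-situation with unbounded production and $(N,M,v)$ the corresponding MRS-game. Then the set $M^o$ of optimal suppliers satisfies $|M^o|\ge 1$.
   Context: An MRS-situation $(N,M,W,C,P,\overline{Q})$ consists of a finite set $N$ of retailers and a finite set $M$ of suppliers (distinct agents), and: for each $j\in M$ a unit production cost $c_j:[0,\infty)\to(0,\infty)$, decreasing and continuous with $c_j(q)q$ nondecreasing, and a wholesale price $w_j:[0,\infty)\to(0,\infty)$, nonincreasing and continuous, with $w_j(q)>c_j(q)$ for all $q\ge0$ and $w_j(q)q$ nondecreasing; for each $i\in N$ a selling price $p_i:[0,\infty)\to\mathbb{R}$, nonincreasing and continuous, with $p_i(0)>w_j(0)$ for all $j$, and $q_i^*>0$ with $p_i(q_i^* )=0$; and capacities $\overline{q}_{ij}\in(0,\infty)$. The situation has unbounded production, written $(N,M,W,C,P,\infty)$, if $\overline{q}_{ij}=K$ for all $i,j$ with $K$ large enough that the capacities do not affect optimal solutions (e.g. $K\ge\max_{i\in N}q_i^*$, so capacity constraints are implied by $q_{iM}\le q_i^*$). For an order matrix $q=(q_{ij})_{i\in R,j\in M}\ge0$: $q_{Rj}=\sum_{i\in R}q_{ij}$, $q_{iM}=\sum_{j}q_{ij}$, $q_{RS}=\sum_{j\in S}\sum_{i\in R}q_{ij}$, $q_i=(q_{ij})_j$, $q_R=(q_{Rj})_j$; $c_S(x)=\min_{j\in S}c_j(x)$. For $i\in R$: $\Pi_i(q_i,\Psi^S(q_R))=p_i(q_{iM})q_{iM}-\sum_{j\in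 S}c_S(q_{RS})q_{ij}-\sum_{j\in M\setminus S}w_j(q_{Rj})q_{ij}$. $\mathbb{Q}^R=\{q\in\mathbb{R}_+^{R\times M}: q_{iM}\le q_i^*,\ q_{ij}\le\overline{q}_{ij}\}$; $q^{(R,S)}$ is an optimal solution of $\max\{\sum_{i\in R}\Pi_i(q_i,\Psi^S(q_R)):q\in\mathbb{Q}^R\}$. MRS-game: $v(R,S)=\sum_{i\in R}\Pi_i(q_i^{(R,S)},\Psi^S(q_R^{(R,S)}))$ for $\emptyset\ne R\subseteq N$, $S\subseteq M$, $v(\emptyset,S)=0$. A supplier $j\in M$ is optimal if $v(N,M)=v(N,\{j\})$; $M^o$ is the set of optimal suppliers. *)

theory Defs
  imports Complex_Main
begin

text \<open>Retailers have type 'n, suppliers type 'm (so they are distinct agents).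
  c j = unit production cost of supplier j, w j = wholesale price of j,
  p i = selling price of retailer i, qs i = q_i^*, qbar i j = capacity.\<close>

definition mrs_situation ::
  "'n set \<Rightarrow> 'm set \<Rightarrow> ('m \<Rightarrow> real \<Rightarrow> real) \<Rightarrow> ('m \<Rightarrow> real \<Rightarrow> real) \<Rightarrow>
   ('n \<Rightarrow> real \<Rightarrow> real) \<Rightarrow> ('n \<Rightarrow> real) \<Rightarrow> ('n \<Rightarrow> 'm \<Rightarrow> real) \<Rightarrow> bool" where
  "mrs_situation N M c w p qs qbar \<longleftrightarrow>
     finite N \<and> finite M \<and>
     (\<forall>j\<in>M.
        (\<forall>x\<ge>0. c j x > 0) \<and>
        (\<forall>x y. 0 \<le> x \<longrightarrow> x < y \<longrightarrow> c j y < c j x) \<and>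
        continuous_on {0..} (c j) \<and>
        (\<forall>x y. 0 \<le> x \<longrightarrow> x \<le> y \<longrightarrow> c j x * x \<le> c j y * y) \<and>
        (\<forall>x\<ge>0. w j x > 0) \<and>
        (\<forall>x y. 0 \<le> x \<longrightarrow> x \<le> y \<longrightarrow> w j y \<le> w j x) \<and>
        continuous_on {0..} (w j) \<and>
        (\<forall>x\<ge>0. w j x > c j x) \<and>
        (\<forall>x y. 0 \<le> x \<longrightarrow> x \<le> y \<longrightarrow> w j x * x \<le> w j y * y)) \<and>
     (\<forall>i\<in>N.
        (\<forall>x y. 0 \<le> x \<longrightarrow> x \<le> y \<longrightarrow> p i y \<le> p i x) \<and>
        continuous_on {0..} (p i) \<and>
        (\<forall>j\<in>M. p i 0 > w j 0) \<and>
        qs i > 0 \<and> p i (qs i) = 0) \<and>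
     (\<forall>i\<in>N. \<forall>j\<in>M. qbar i j > 0)"

definition unbounded_production :: "'n set \<Rightarrow> 'm set \<Rightarrow> ('n \<Rightarrow> real) \<Rightarrow> ('n \<Rightarrow> 'm \<Rightarrow> real) \<Rightarrow> bool" where
  "unbounded_production N M qs qbar \<longleftrightarrow>
     (\<exists>K. (\<forall>i\<in>N. \<forall>j\<in>M. qbar i j = K) \<and> (\<forall>i\<in>N. qs i \<le> K))"

definition cS :: "('m \<Rightarrow> real \<Rightarrow> real) \<Rightarrow> 'm set \<Rightarrow> real \<Rightarrow> real" where
  "cS c S x = Min ((\<lambda>j. c j x) ` S)"

definition orders :: "'n set \<Rightarrow> 'm set \<Rightarrow> ('n \<Rightarrow> real) \<Rightarrow> ('n \<Rightarrow> 'm \<Rightarrow> real) \<Rightarrow> ('n \<Rightarrow> 'm \<Rightarrow> real) set" where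
  "orders R M qs qbar = {q. (\<forall>i j. (i \<notin> R \<or> j \<notin> M) \<longrightarrow> q i j = 0) \<and>
       (\<forall>i\<in>R. \<forall>j\<in>M. 0 \<le> q i j \<and> q i j \<le> qbar i j) \<and>
       (\<forall>i\<in>R. (\<Sum>j\<in>M. q i j) \<le> qs i)}"

definition profit ::
  "'n set \<Rightarrow> 'm set \<Rightarrow> 'm set \<Rightarrow> ('m \<Rightarrow> real \<Rightarrow> real) \<Rightarrow> ('m \<Rightarrow> real \<Rightarrow> real) \<Rightarrow>
   ('n \<Rightarrow> real \<Rightarrow> real) \<Rightarrow> ('n \<Rightarrow> 'm \<Rightarrow> real) \<Rightarrow> 'n \<Rightarrow> real" where
  "profit R M S c w p q i =
     (let qiM = (\<Sum>j\<in>M. q i j);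
          qRS = (\<Sum>j\<in>S. \<Sum>k\<in>R. q k j)
      in p i qiM * qiM
         - (\<Sum>j\<in>S. cS c S qRS * q i j)
         - (\<Sum>j\<in>M - S. w j (\<Sum>k\<in>R. q k j) * q i j))"

definition mrs_game ::
  "'m set \<Rightarrow> ('m \<Rightarrow> real \<Rightarrow> real) \<Rightarrow> ('m \<Rightarrow> real \<Rightarrow> real) \<Rightarrow>
   ('n \<Rightarrow> real \<Rightarrow> real) \<Rightarrow> ('n \<Rightarrow> real) \<Rightarrow> ('n \<Rightarrow> 'm \<Rightarrow> real) \<Rightarrow> 'n set \<Rightarrow> 'm set \<Rightarrow> real" where
  "mrs_game M c w p qs qbar R S =
     (if R = {} then 0
      else (SUP q\<in>orders R M qs qbar. \<Sum>i\<in>R. profit R M S c w p q i))"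

definition optimal_suppliers ::
  "'n set \<Rightarrow> 'm set \<Rightarrow> ('m \<Rightarrow> real \<Rightarrow> real) \<Rightarrow> ('m \<Rightarrow> real \<Rightarrow> real) \<Rightarrow>
   ('n \<Rightarrow> real \<Rightarrow> real) \<Rightarrow> ('n \<Rightarrow> real) \<Rightarrow> ('n \<Rightarrow> 'm \<Rightarrow> real) \<Rightarrow> 'm set" where
  "optimal_suppliers N M c w p qs qbar =
     {j\<in>M. mrs_game M c w p qs qbar N M = mrs_game M c w p qs qbar N {j}}"

end

theory Submission
  imports Defs
begin

text \<open>
  Fix an order matrix \<open>q\<close> of the grand coalition. Pooling all suppliers is never worse than
  using a single supplier \<open>j\<close> only: the pooled unit cost at the total volume is at most
  \<open>c\<^sub>k\<close> at that volume, hence (costs decrease) at most \<open>c\<^sub>k\<close> at the volume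
  ordered from \<open>k\<close>, which is below the wholesale price \<open>w\<^sub>k\<close>. Conversely, if \<open>j\<close> is a
  cheapest supplier at the total volume, moving every retailer's whole order to \<open>j\<close>
  yields the same profit with \<open>j\<close> alone; unbounded capacities keep the moved order
  feasible. Hence \<open>v(N,M) = max\<^sub>j v(N,{j})\<close>, and a maximising \<open>j\<close> is an optimal supplier.
\<close>

definition total_profit ::
  "'n set \<Rightarrow> 'm set \<Rightarrow> 'm set \<Rightarrow> ('m \<Rightarrow> real \<Rightarrow> real) \<Rightarrow> ('m \<Rightarrow> real \<Rightarrow> real) \<Rightarrow>
   ('n \<Rightarrow> real \<Rightarrow> real) \<Rightarrow> ('n \<Rightarrow> 'm \<Rightarrow> real) \<Rightarrow> real" where
  "total_profit R M S c w p q = (\<Sum>i\<in>R. profit R M S c w p q i)"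

lemma total_profit_eq:
  "total_profit R M S c w p q =
     (\<Sum>i\<in>R. p i (\<Sum>k\<in>M. q i k) * (\<Sum>k\<in>M. q i k))
     - cS c S (\<Sum>k\<in>S. \<Sum>l\<in>R. q l k) * (\<Sum>k\<in>S. \<Sum>l\<in>R. q l k)
     - (\<Sum>k\<in>M - S. w k (\<Sum>l\<in>R. q l k) * (\<Sum>l\<in>R. q l k))"
  unfolding total_profit_def profit_def Let_def
  by (simp add: sum_subtractf sum_distrib_left sum.swap[of _ R])

lemma mrs_game_eq_SUP:
  "R \<noteq> {} \<Longrightarrow>
   mrs_game M c w p qs qbar R S = (SUP q\<in>orders R M qs qbar. total_profit R M S c w p q)"
  unfolding mrs_game_def total_profit_def by simp

lemma cS_le: "finite S \<Longrightarrow> k \<in> S \<Longrightarrow> cS c S x \<le> c k x"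
  unfolding cS_def by (rule Min_le) auto

lemma cS_attained:
  assumes "finite S" "S \<noteq> {}"
  obtains k where "k \<in> S" "cS c S x = c k x"
proof -
  have "Min ((\<lambda>j. c j x) ` S) \<in> (\<lambda>j. c j x) ` S"
    using assms by (intro Min_in) auto
  then show thesis using that unfolding cS_def by auto
qed

lemma cS_subset_le: "finite T \<Longrightarrow> S \<subseteq> T \<Longrightarrow> S \<noteq> {} \<Longrightarrow> cS c T x \<le> cS c S x"
  unfolding cS_def by (intro Min_antimono) auto

lemma mrs_situation_finite_suppliers: "mrs_situation N M c w p qs qbar \<Longrightarrow> finite M"
  unfolding mrs_situation_def by blast

lemma mrs_situation_cost:
  assumes "mrs_situation N M c w p qs qbar" "j \<in> M" "0 \<le> x"
  shows "0 < c j x" "c j x < w j x" "x \<le> y \<Longrightarrow> c j y \<le> c j x"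
  using assms unfolding mrs_situation_def by (auto simp: less_imp_le le_less)

lemma cS_antimono:
  assumes sit: "mrs_situation N M c w p qs qbar" and "S \<subseteq> M" "S \<noteq> {}" "0 \<le> x" "x \<le> y"
  shows "cS c S y \<le> cS c S x"
proof -
  have "finite S" using assms mrs_situation_finite_suppliers[OF sit] finite_subset by blast
  then obtain k where k: "k \<in> S" "cS c S x = c k x" using cS_attained assms by metis
  have "cS c S y \<le> c k y" using cS_le \<open>finite S\<close> k(1) .
  also have "\<dots> \<le> c k x" using mrs_situation_cost(3)[OF sit _ \<open>0 \<le> x\<close>] k(1) assms by blast
  finally show ?thesis using k(2) by simp
qed

lemma cS_pos:
  assumes sit: "mrs_situation N M c w p qs qbar" and "S \<subseteq> M" "S \<noteq> {}" "0 \<le> x"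
  shows "0 < cS c S x"
proof -
  have "finite S" using assms mrs_situation_finite_suppliers[OF sit] finite_subset by blast
  then obtain k where "k \<in> S" "cS c S x = c k x" using cS_attained assms by metis
  then show ?thesis using mrs_situation_cost(1)[OF sit] assms by auto
qed

lemma orders_nonneg: "q \<in> orders R M qs qbar \<Longrightarrow> i \<in> R \<Longrightarrow> k \<in> M \<Longrightarrow> 0 \<le> q i k"
  unfolding orders_def by auto

lemma zero_in_orders:
  assumes "mrs_situation N M c w p qs qbar" "R \<subseteq> N"
  shows "(\<lambda>i k. 0) \<in> orders R M qs qbar"
  using assms unfolding orders_def mrs_situation_def by (auto simp: less_imp_le)

lemma total_profit_le_bound:
  assumes sit: "mrs_situation N M c w p qs qbar" and "R \<subseteq> N" "S \<subseteq> M" "S \<noteq> {}"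
    and q: "q \<in> orders R M qs qbar"
  shows "total_profit R M S c w p q \<le> (\<Sum>i\<in>R. p i 0 * qs i)"
proof -
  have col: "0 \<le> (\<Sum>l\<in>R. q l k)" if "k \<in> M" for k
    using orders_nonneg[OF q] that by (simp add: sum_nonneg)
  have revenue: "p i x * x \<le> p i 0 * qs i" if i: "i \<in> R" and "x = (\<Sum>k\<in>M. q i k)" for i x
  proof -
    have x: "0 \<le> x" "x \<le> qs i"
      using orders_nonneg[OF q i] q i \<open>x = _\<close> unfolding orders_def by (auto simp: sum_nonneg)
    have "i \<in> N" using i \<open>R \<subseteq> N\<close> by blast
    then have anti: "\<And>x y. 0 \<le> x \<Longrightarrow> x \<le> y \<Longrightarrow> p i y \<le> p i x" and "p i (qs i) = 0"
      using sit unfolding mrs_situation_def by blast+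
    have p: "p i x \<le> p i 0" "0 \<le> p i 0"
      using anti[of 0 x] anti[of 0 "qs i"] x \<open>p i (qs i) = 0\<close> by auto
    have "p i x * x \<le> p i 0 * x" using p(1) x(1) by (rule mult_right_mono)
    also have "\<dots> \<le> p i 0 * qs i" using x(2) p(2) by (rule mult_left_mono)
    finally show ?thesis .
  qed
  define X where "X = (\<Sum>k\<in>S. \<Sum>l\<in>R. q l k)"
  have "0 \<le> X" unfolding X_def using col \<open>S \<subseteq> M\<close> by (auto intro: sum_nonneg)
  then have "0 \<le> cS c S X * X"
    using cS_pos[OF sit \<open>S \<subseteq> M\<close> \<open>S \<noteq> {}\<close>] by (simp add: less_imp_le)
  moreover have "0 \<le> (\<Sum>k\<in>M - S. w k (\<Sum>l\<in>R. q l k) * (\<Sum>l\<in>R. q l k))"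
  proof (intro sum_nonneg)
    fix k assume "k \<in> M - S"
    then show "0 \<le> w k (\<Sum>l\<in>R. q l k) * (\<Sum>l\<in>R. q l k)"
      using col mrs_situation_cost(1,2)[OF sit, of k "\<Sum>l\<in>R. q l k"] by simp
  qed
  moreover have "(\<Sum>i\<in>R. p i (\<Sum>k\<in>M. q i k) * (\<Sum>k\<in>M. q i k)) \<le> (\<Sum>i\<in>R. p i 0 * qs i)"
    using revenue by (intro sum_mono) blast
  ultimately show ?thesis unfolding total_profit_eq X_def by linarith
qed

lemma total_profit_mono_suppliers:
  assumes sit: "mrs_situation N M c w p qs qbar" and q: "q \<in> orders R M qs qbar"
    and S: "S \<noteq> {}" "S \<subseteq> T" and T: "T \<subseteq> M"
  shows "total_profit R M S c w p q \<le> total_profit R M T c w p q"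
proof -
  define Q where "Q k = (\<Sum>l\<in>R. q l k)" for k
  define XS where "XS = (\<Sum>k\<in>S. Q k)"
  define XT where "XT = (\<Sum>k\<in>T. Q k)"
  define W where "W k = w k (Q k) * Q k" for k
  have fin: "finite M" "finite T"
    using mrs_situation_finite_suppliers[OF sit] T finite_subset by auto
  have Q: "0 \<le> Q k" if "k \<in> M" for k
    unfolding Q_def using orders_nonneg[OF q] that by (simp add: sum_nonneg)
  have XS: "0 \<le> XS" unfolding XS_def using Q S(2) T by (intro sum_nonneg) blast
  have XT: "XT = (\<Sum>k\<in>T - S. Q k) + XS"
    unfolding XT_def XS_def using S(2) fin(2) by (rule sum.subset_diff)
  have W: "(\<Sum>k\<in>M - S. W k) = (\<Sum>k\<in>M - T. W k) + (\<Sum>k\<in>T - S. W k)"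
  proof -
    have "(M - S) - (T - S) = M - T" using S(2) by blast
    then show ?thesis using sum.subset_diff[of "T - S" "M - S" W] T fin(1) by auto
  qed
  have "cS c T XT \<le> cS c S XT" using cS_subset_le[OF fin(2) S(2) S(1)] .
  also have "\<dots> \<le> cS c S XS"
  proof -
    have "0 \<le> (\<Sum>k\<in>T - S. Q k)" using Q T by (intro sum_nonneg) blast
    then show ?thesis using cS_antimono[OF sit _ S(1) XS] S(2) T XT by simp
  qed
  finally have "cS c T XT * XS \<le> cS c S XS * XS" using XS by (rule mult_right_mono)
  moreover have "cS c T XT * Q k \<le> W k" if k: "k \<in> T - S" for k
  proof -
    have "Q k \<le> XT" unfolding XT_def using k fin(2) Q T by (intro member_le_sum) auto
    then have "cS c T XT \<le> c k (Q k)"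
      using cS_le[OF fin(2), of k c XT] mrs_situation_cost(3)[OF sit, of k "Q k" XT] k T Q by force
    also have "\<dots> \<le> w k (Q k)" using mrs_situation_cost(2)[OF sit, of k "Q k"] k T Q by force
    finally show ?thesis unfolding W_def using Q k T by (auto intro: mult_right_mono)
  qed
  then have "(\<Sum>k\<in>T - S. cS c T XT * Q k) \<le> (\<Sum>k\<in>T - S. W k)" by (rule sum_mono)
  ultimately have "cS c T XT * XT \<le> cS c S XS * XS + (\<Sum>k\<in>T - S. W k)"
    unfolding XT by (simp add: distrib_left sum_distrib_left)
  then show ?thesis
    unfolding total_profit_eq Q_def[symmetric] XS_def[symmetric] XT_def[symmetric]
      W_def[symmetric] W by linarith
qed

definition consolidate ::
  "'n set \<Rightarrow> 'm set \<Rightarrow> 'm \<Rightarrow> ('n \<Rightarrow> 'm \<Rightarrow> real) \<Rightarrow> 'n \<Rightarrow> 'm \<Rightarrow> real" where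
  "consolidate R M j q = (\<lambda>i k. if i \<in> R \<and> k = j then (\<Sum>l\<in>M. q i l) else 0)"

lemma row_sum_consolidate:
  "finite M \<Longrightarrow> j \<in> M \<Longrightarrow>
   (\<Sum>k\<in>M. consolidate R M j q i k) = (if i \<in> R then (\<Sum>k\<in>M. q i k) else 0)"
  unfolding consolidate_def by (simp add: sum.delta)

lemma consolidate_in_orders:
  assumes sit: "mrs_situation N M c w p qs qbar" and ub: "unbounded_production N M qs qbar"
    and "R \<subseteq> N" "j \<in> M" and q: "q \<in> orders R M qs qbar"
  shows "consolidate R M j q \<in> orders R M qs qbar"
proof -
  obtain K where K: "\<forall>i\<in>N. \<forall>j\<in>M. qbar i j = K" "\<forall>i\<in>N. qs i \<le> K"
    using ub unfolding unbounded_production_def by blast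
  have row: "0 \<le> (\<Sum>k\<in>M. q i k) \<and> (\<Sum>k\<in>M. q i k) \<le> qs i" if "i \<in> R" for i
    using q that orders_nonneg[OF q that] unfolding orders_def by (auto intro: sum_nonneg)
  let ?q' = "consolidate R M j q"
  have "0 \<le> ?q' i k \<and> ?q' i k \<le> qbar i k" if "i \<in> R" "k \<in> M" for i k
    using row[OF that(1)] K \<open>R \<subseteq> N\<close> that unfolding consolidate_def by force
  moreover have "?q' i k = 0" if "i \<notin> R \<or> k \<notin> M" for i k
    using that \<open>j \<in> M\<close> unfolding consolidate_def by auto
  moreover have "(\<Sum>k\<in>M. ?q' i k) \<le> qs i" if "i \<in> R" for i
    using row[OF that] that
      row_sum_consolidate[OF mrs_situation_finite_suppliers[OF sit] \<open>j \<in> M\<close>, of R q i]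
    by simp
  ultimately show ?thesis unfolding orders_def by blast
qed

lemma total_profit_consolidate:
  assumes "finite M" "j \<in> M"
    and cheapest: "cS c M (\<Sum>k\<in>M. \<Sum>l\<in>R. q l k) = c j (\<Sum>k\<in>M. \<Sum>l\<in>R. q l k)"
  shows "total_profit R M M c w p q = total_profit R M {j} c w p (consolidate R M j q)"
proof -
  let ?q' = "consolidate R M j q"
  have "(\<Sum>l\<in>R. ?q' l j) = (\<Sum>k\<in>M. \<Sum>l\<in>R. q l k)"
    unfolding consolidate_def by (simp add: sum.swap[of _ R M])
  moreover have "(\<Sum>l\<in>R. ?q' l k) = 0" if "k \<noteq> j" for k
    unfolding consolidate_def using that by simp
  moreover have "(\<Sum>i\<in>R. p i (\<Sum>k\<in>M. ?q' i k) * (\<Sum>k\<in>M. ?q' i k)) =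
      (\<Sum>i\<in>R. p i (\<Sum>k\<in>M. q i k) * (\<Sum>k\<in>M. q i k))"
    using row_sum_consolidate[OF assms(1,2), of R q] by (intro sum.cong) auto
  ultimately show ?thesis unfolding total_profit_eq cS_def using cheapest[unfolded cS_def] by simp
qed

lemma bdd_above_total_profit:
  assumes "mrs_situation N M c w p qs qbar" "R \<subseteq> N" "S \<subseteq> M" "S \<noteq> {}"
  shows "bdd_above (total_profit R M S c w p ` orders R M qs qbar)"
  using total_profit_le_bound[OF assms] by (intro bdd_aboveI2) blast

lemma mrs_game_mono_suppliers:
  assumes sit: "mrs_situation N M c w p qs qbar" and "R \<subseteq> N"
    and "S \<noteq> {}" "S \<subseteq> T" "T \<subseteq> M"
  shows "mrs_game M c w p qs qbar R S \<le> mrs_game M c w p qs qbar R T"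
proof (cases "R = {}")
  case False
  have "orders R M qs qbar \<noteq> {}" using zero_in_orders[OF sit \<open>R \<subseteq> N\<close>] by blast
  moreover have "bdd_above (total_profit R M T c w p ` orders R M qs qbar)"
  proof -
    have "T \<noteq> {}" using \<open>S \<noteq> {}\<close> \<open>S \<subseteq> T\<close> by blast
    then show ?thesis by (rule bdd_above_total_profit[OF sit \<open>R \<subseteq> N\<close> \<open>T \<subseteq> M\<close>])
  qed
  ultimately show ?thesis
    unfolding mrs_game_eq_SUP[OF False]
    using total_profit_mono_suppliers[OF sit _ assms(3-5)] by (intro cSUP_mono) blast+
qed (simp add: mrs_game_def)

lemma mrs_game_eq_Max_single:
  assumes sit: "mrs_situation N M c w p qs qbar" and ub: "unbounded_production N M qs qbar"
    and "R \<subseteq> N" "M \<noteq> {}"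
  shows "mrs_game M c w p qs qbar R M = Max ((\<lambda>j. mrs_game M c w p qs qbar R {j}) ` M)"
    (is "?v M = Max (?single ` M)")
proof (rule antisym)
  have fin: "finite M" using mrs_situation_finite_suppliers[OF sit] by blast
  show "?v M \<le> Max (?single ` M)"
  proof (cases "R = {}")
    case True
    then show ?thesis using fin \<open>M \<noteq> {}\<close> by (simp add: mrs_game_def)
  next
    case False
    show ?thesis
      unfolding mrs_game_eq_SUP[OF False, where S = M]
    proof (rule cSUP_least)
      show "orders R M qs qbar \<noteq> {}" using zero_in_orders[OF sit \<open>R \<subseteq> N\<close>] by blast
    next
      fix q assume q: "q \<in> orders R M qs qbar"
      obtain j where j: "j \<in> M"
        "cS c M (\<Sum>k\<in>M. \<Sum>l\<in>R. q l k) = c j (\<Sum>k\<in>M. \<Sum>l\<in>R. q l k)"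
        using cS_attained[OF fin \<open>M \<noteq> {}\<close>] by metis
      have "total_profit R M M c w p q = total_profit R M {j} c w p (consolidate R M j q)"
        using total_profit_consolidate[OF fin j] .
      also have "\<dots> \<le> ?single j"
        unfolding mrs_game_eq_SUP[OF False]
        using consolidate_in_orders[OF sit ub \<open>R \<subseteq> N\<close> j(1) q]
          bdd_above_total_profit[OF sit \<open>R \<subseteq> N\<close>, of "{j}"] j(1)
        by (intro cSUP_upper) auto
      also have "\<dots> \<le> Max (?single ` M)" using fin j(1) by (intro Max_ge) auto
      finally show "total_profit R M M c w p q \<le> Max (?single ` M)" .
    qed
  qed
  show "Max (?single ` M) \<le> ?v M"
    using fin \<open>M \<noteq> {}\<close> mrs_game_mono_suppliers[OF sit \<open>R \<subseteq> N\<close>]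
    by (intro Max.boundedI) auto
qed

theorem lemma3:
  fixes N :: "'n set" and M :: "'m set"
    and c w :: "'m \<Rightarrow> real \<Rightarrow> real" and p :: "'n \<Rightarrow> real \<Rightarrow> real"
    and qs :: "'n \<Rightarrow> real" and qbar :: "'n \<Rightarrow> 'm \<Rightarrow> real"
  assumes "mrs_situation N M c w p qs qbar"
    and "unbounded_production N M qs qbar"
    and "M \<noteq> {}"
  shows "card (optimal_suppliers N M c w p qs qbar) \<ge> 1"
proof -
  let ?single = "\<lambda>j. mrs_game M c w p qs qbar N {j}"
  have fin: "finite M" using mrs_situation_finite_suppliers[OF assms(1)] by blast
  have "Max (?single ` M) \<in> ?single ` M" using fin \<open>M \<noteq> {}\<close> by (intro Max_in) auto
  then obtain j where "j \<in> M" "Max (?single ` M) = ?single j" by blast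
  then have "j \<in> optimal_suppliers N M c w p qs qbar"
    using mrs_game_eq_Max_single[OF assms(1,2) order_refl assms(3)]
    unfolding optimal_suppliers_def by simp
  moreover have "finite (optimal_suppliers N M c w p qs qbar)"
    using fin unfolding optimal_suppliers_def by simp
  ultimately show ?thesis by (metis One_nat_def Suc_leI card_gt_0_iff empty_iff)
qed

end
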